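(* Let $p,q$ be odd primes with $q-p=2$, and let $D=D_1\cdots D_n$ with $D_1,\dots,D_n$ distinct primes, $2\nmid D$, $p\nmid D$, $q\nmid D$; put $\widehat{D_i}=D/D_i$. Let $E'=E'_{+}: y^2=x^3-2(p+q)Dx^2+4D^2x$ and $\widehat\varphi:E'\to E$ the dual $2$-isogeny onto $E=E_+: y^2=x(x+pD)(x+qD)$. For each $i$ put $$\Pi_i^{+}(D)'=\Big(1-\big(\tfrac{-p\widehat{D_i}}{D_i}\big)\Big)\Big(1-\big(\tfrac{-q\widehat{D_i}}{D_i}\big)\Big)+\sum_{j=1,\,j\ne i}^{n}\Big(1-\big(\tfrac{D_i}{D_j}\big)\Big)\Big(1-\big(\tfrac{pqD_i}{D_j}\big)\Big).$$ Let $Z(n)=\{1,\dots,n\}$ and $I=\{i\in Z(n): D_i\equiv 1\ (\mathrm{mod}\ 8)\}\cup\{i: (1+p\widehat{D_i})(1+q\widehat{D_i})\equiv 0\ (\mathrm{mod}\ 16)\}\cup\{i: D_i\equiv 3\ (\mathrm{mod}\ 8),\ p\equiv 1\ (\mathrm{mod}\ 4)\}\cup\{i: D_i\equiv 7\ (\mathrm{mod}\ 8),\ p\equiv 3\ (\mathrm{mod}\ 4)\}$, and $\rho^{+}(D)'=\sum_{i\in I}\Big[\frac{1}{1+\Pi_i^{+}(D)'}\Big]$. Then there exists a subset $T\subset\{D_1,\dots,D_n\}$ with $\#T=\rho^{+}(D)'$ such that $S^{(\widehat\varphi)}(E'/\mathbb{Q})\supset\langle T\bmod\mathbb{Q}^{\star2}\rangle\cong(\mathbb{Z}/2\mathbb{Z})^{\rho^{+}(D)'}$.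 In particular $\dim_2 S^{(\widehat\varphi)}(E'/\mathbb{Q})\ge\rho^{+}(D)'$.
   Context: $(\frac{\cdot}{\cdot})$ is the Legendre symbol and $[x]$ the greatest integer $\le x$. The dual isogeny is $\widehat\varphi(x,y)=(y^2/(4x^2),\ y(4D^2-x^2)/(8x^2))$. The $\widehat\varphi$-Selmer group is viewed as a subgroup of $\mathbb{Q}^\star/\mathbb{Q}^{\star2}$: with $S=\{\infty,2,p,q,D_1,\dots,D_n\}$ and $\mathbb{Q}(S,2)=\langle -1,2,p,q,D_1,\dots,D_n\rangle$, it equals the set of $d\in\mathbb{Q}(S,2)$ (squarefree integer representatives) such that $C'_d: dw^2=d^2+(p+q)Dd z^2+pqD^2z^4$ has a $\mathbb{Q}_v$-point for every $v\in S$. *)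

theory Defs
  imports Complex_Main "HOL-Number_Theory.Number_Theory" "HOL-Computational_Algebra.Squarefree"
begin

text \<open>The quartic C'_d : d w^2 = d^2 + A d z^2 + B z^4 with A = (p+q)D, B = pqD^2,
  taken as a smooth projective curve in weighted projective space P(1,2,1) with
  coordinates (U,W,Z): d W^2 = d^2 U^4 + A d U^2 Z^2 + B Z^4.\<close>

definition quartic_form :: "int \<Rightarrow> int \<Rightarrow> int \<Rightarrow> int \<Rightarrow> int \<Rightarrow> int \<Rightarrow> int" where
  "quartic_form A B d U W Z = d * W^2 - (d^2 * U^4 + A * d * U^2 * Z^2 + B * Z^4)"

definition has_real_point :: "int \<Rightarrow> int \<Rightarrow> int \<Rightarrow> bool" where
  "has_real_point A B d \<longleftrightarrow>
     (\<exists>u w z :: real. (u, z) \<noteq> (0, 0) \<and>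
        of_int d * w^2 = of_int d^2 * u^4 + of_int A * of_int d * u^2 * z^2 + of_int B * z^4)"

text \<open>Q_l-point for a prime l: by compactness of Z_l, a Q_l-point of the projective curve
  exists iff for every k there is a solution modulo l^k with U, Z not both divisible by l.\<close>
definition has_padic_point :: "int \<Rightarrow> int \<Rightarrow> int \<Rightarrow> int \<Rightarrow> bool" where
  "has_padic_point l A B d \<longleftrightarrow>
     (\<forall>k::nat. \<exists>U W Z :: int. (\<not> l dvd U \<or> \<not> l dvd Z) \<and>
        [quartic_form A B d U W Z = 0] (mod l ^ k))"

text \<open>The hat-phi Selmer group of E', as a set of squarefree integer representatives in
  Q(S,2) = <-1,2,p,q,D_1,...,D_n>, with S = {infinity,2,p,q,D_1,...,D_n}.\<close>
definition selmer_hat :: "int \<Rightarrow> int \<Rightarrow> int \<Rightarrow> int set \<Rightarrow> int set" where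
  "selmer_hat p q D Ps =
     {d. d \<noteq> 0 \<and> squarefree d \<and>
         (\<forall>r::int. prime r \<and> r dvd d \<longrightarrow> r \<in> {2, p, q} \<union> Ps) \<and>
         has_real_point ((p + q) * D) (p * q * D^2) d \<and>
         (\<forall>l \<in> {2, p, q} \<union> Ps. has_padic_point l ((p + q) * D) (p * q * D^2) d)}"

text \<open>Squarefree representatives of the subgroup of Q*/Q*^2 generated by a finite set T
  of integers: classes of the products of subsets of T.\<close>
definition gen_sq :: "int set \<Rightarrow> int set" where
  "gen_sq T = {d. d \<noteq> 0 \<and> squarefree d \<and>
       (\<exists>U \<subseteq> T. \<exists>r::rat. r \<noteq> 0 \<and> of_int d * r^2 = of_int (\<Prod>U))}"

definition Pi_plus' :: "int \<Rightarrow> int \<Rightarrow> nat \<Rightarrow> (nat \<Rightarrow> int) \<Rightarrow> nat \<Rightarrow> int" where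
  "Pi_plus' p q n Ds i =
     (let D = (\<Prod>j\<in>{1..n}. Ds j); Dh = D div Ds i in
       (1 - Legendre (- p * Dh) (Ds i)) * (1 - Legendre (- q * Dh) (Ds i))
       + (\<Sum>j\<in>{1..n} - {i}. (1 - Legendre (Ds i) (Ds j)) * (1 - Legendre (p * q * Ds i) (Ds j))))"

definition I_set :: "int \<Rightarrow> int \<Rightarrow> nat \<Rightarrow> (nat \<Rightarrow> int) \<Rightarrow> nat set" where
  "I_set p q n Ds =
     {i \<in> {1..n}. let D = (\<Prod>j\<in>{1..n}. Ds j); Dh = D div Ds i in
        [Ds i = 1] (mod 8)
      \<or> [(1 + p * Dh) * (1 + q * Dh) = 0] (mod 16)
      \<or> ([Ds i = 3] (mod 8) \<and> [p = 1] (mod 4))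
      \<or> ([Ds i = 7] (mod 8) \<and> [p = 3] (mod 4))}"

definition rho_plus' :: "int \<Rightarrow> int \<Rightarrow> nat \<Rightarrow> (nat \<Rightarrow> int) \<Rightarrow> int" where
  "rho_plus' p q n Ds =
     (\<Sum>i\<in>I_set p q n Ds. \<lfloor>1 / (1 + real_of_int (Pi_plus' p q n Ds i))\<rfloor>)"

end

theory Submission
  imports Defs
begin

text \<open>Let \<open>J\<close> be the set of \<open>i \<in> I\<close> with \<open>\<Pi>\<^sub>i = 0\<close>. Every summand of \<open>\<Pi>\<^sub>i\<close> is a product of
  two factors \<open>1 - (\<cdot>/\<cdot>) \<ge> 0\<close>, so \<open>[1/(1+\<Pi>\<^sub>i)]\<close> is the indicator of \<open>\<Pi>\<^sub>i = 0\<close> and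
  \<open>\<rho> = #J\<close>; moreover \<open>\<Pi>\<^sub>i = 0\<close> means that in each summand one of the two symbols is \<open>1\<close>.

  For \<open>U \<subseteq> J\<close> put \<open>d = \<Prod>\<^sub>i\<^sub>\<in>\<^sub>U D\<^sub>i\<close> and \<open>e = D/d\<close>. Then \<open>d C'_d\<close> reads
  \<open>(d W)\<^sup>2 = (d U\<^sup>2 + p D Z\<^sup>2)(d U\<^sup>2 + q D Z\<^sup>2)\<close>, so a local point exists as soon as
  \<open>d (U\<^sup>2 + p e Z\<^sup>2)(U\<^sup>2 + q e Z\<^sup>2)\<close> is a square modulo all powers of \<open>l\<close>; by Hensel's lemma
  it suffices to exhibit such a value that is a nonzero square mod \<open>l\<close> (mod 8 for \<open>l = 2\<close>).
  At \<open>l = D\<^sub>j\<close> the required Legendre symbols come from \<open>\<Pi>\<^sub>i = 0\<close>: either \<open>(pq/D\<^sub>j) = 1\<close>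
  and the conditions collapse to one symbol, or two candidate symbols multiply to \<open>-1\<close> and
  one of them is \<open>1\<close>. At \<open>p\<close> and \<open>q\<close> a point always exists, and at \<open>2\<close> the congruences
  defining \<open>I\<close> give one by a computation modulo 16. So all \<open>2^#J\<close> products lie in the
  Selmer group, and they are distinct square classes because the \<open>D\<^sub>i\<close> are distinct primes.\<close>

section \<open>Squares modulo prime powers and the Legendre symbol\<close>

definition square_mod_powers :: "int \<Rightarrow> int \<Rightarrow> bool" where
  "square_mod_powers l c \<longleftrightarrow> (\<forall>k::nat. \<exists>x. [x^2 = c] (mod l^k))"

lemma square_mod_powers_if_Legendre_eq_1:
  fixes l c :: int
  assumes l: "prime l" "l \<noteq> 2" and L: "Legendre c l = 1"
  shows "square_mod_powers l c"
proof -
  have nd: "\<not> l dvd c" using L by (auto simp: Legendre_def cong_0_iff)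
  have "\<not> l dvd 2"
    using l prime_ge_2_int[OF l(1)] zdvd_imp_le[of l 2] by force
  have lift: "\<exists>x. [x^2 = c] (mod l^(Suc k))" for k
  proof (induction k)
    case 0
    then show ?case using L by (auto simp: Legendre_def QuadRes_def split: if_splits)
  next
    case (Suc k)
    then obtain x s where s: "x^2 - c = l^(Suc k) * s"
      by (metis cong_iff_dvd_diff cong_sym_eq dvd_def)
    have "\<not> l dvd x"
    proof
      assume "l dvd x"
      then have "l dvd x^2 - (x^2 - c)" using s by (simp add: power2_eq_square)
      with nd show False by simp
    qed
    then have "\<not> l dvd 2 * x" using \<open>\<not> l dvd 2\<close> l(1) by (simp add: prime_dvd_mult_iff)
    then have "coprime l (2*x)" using l(1) by (intro prime_imp_coprime)
    then have "coprime (2*x) l" by (simp only: coprime_commute)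
    then obtain u where u: "[(2*x) * u = 1] (mod l)"
      using cong_solve_coprime_int by blast
    text \<open>Newton step: \<open>t\<close> solves \<open>s + 2 x t \<equiv> 0 (mod l)\<close>.\<close>
    define t where "t = - s * u"
    have "[s + 2*x*t = s - s * ((2*x)*u)] (mod l)" by (simp add: t_def algebra_simps)
    also have "[s - s * ((2*x)*u) = s - s * 1] (mod l)"
      by (intro cong_diff cong_refl cong_mult u)
    finally obtain m where m: "s + 2*x*t = l * m" by (auto simp: cong_0_iff dvd_def)
    define P where "P = l^(Suc k)"
    have "(x + t * P)^2 - c = (x^2 - c) + P * (2*x*t) + t^2 * (P * P)"
      by (simp add: power2_eq_square algebra_simps)
    also have "\<dots> = P * (s + 2*x*t) + t^2 * (P * P)"
      using s by (simp add: P_def algebra_simps)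
    also have "\<dots> = (l * P) * (m + t^2 * l^k)"
      unfolding m by (simp add: P_def algebra_simps)
    finally have "[(x + t * P)^2 = c] (mod l^(Suc (Suc k)))"
      by (simp add: P_def cong_iff_dvd_diff cong_sym_eq)
    then show ?case by blast
  qed
  show ?thesis
    unfolding square_mod_powers_def
  proof
    fix k :: nat
    show "\<exists>x. [x^2 = c] (mod l^k)"
      using lift[of "k - 1"] by (cases k) auto
  qed
qed

lemma square_mod_powers_2_if_cong_1_mod_8:
  fixes c :: int
  assumes c: "[c = 1] (mod 8)"
  shows "square_mod_powers 2 c"
proof -
  have "odd c" using c by (simp add: cong_def) presburger
  have lift: "\<exists>x. [x^2 = c] (mod 2^(k+3))" for k
  proof (induction k)
    case 0
    have "[1^2 = c] (mod 2^(0+3))" using c by (simp add: cong_sym)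
    then show ?case by blast
  next
    case (Suc k)
    then obtain x s where s: "x^2 - c = 2^(k+3) * s"
      by (metis cong_iff_dvd_diff dvd_def)
    have "odd x"
    proof
      assume "even x"
      then have "even (x^2 - (x^2 - c))" using s by simp
      with \<open>odd c\<close> show False by simp
    qed
    show ?case
    proof (cases "even s")
      case True
      then obtain s' where "s = 2*s'" by blast
      then have "x^2 - c = 2^(Suc k + 3) * s'" using s by (simp add: power_add)
      then have "[x^2 = c] (mod 2^(Suc k + 3))" by (simp add: cong_iff_dvd_diff)
      then show ?thesis by blast
    next
      case False
      then obtain m where m: "s + x = 2*m" using \<open>odd x\<close> by (metis odd_add evenE)
      define P :: int where "P = 2^(k+2)"
      text \<open>Since \<open>x\<close> is odd, adding \<open>2^(k+2)\<close> to \<open>x\<close> changes \<open>x^2\<close> by \<open>2^(k+3)\<close> modulo \<open>2^(k+4)\<close>.\<close>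
      have "(x + P)^2 - c = (x^2 - c) + 2 * P * x + P * P"
        by (simp add: power2_eq_square algebra_simps)
      also have "\<dots> = 2 * P * (s + x) + P * P"
        using s by (simp add: P_def power_add algebra_simps)
      also have "\<dots> = 4 * P * (m + 2^k)"
        unfolding m by (simp add: P_def power_add algebra_simps)
      finally have "[(x + P)^2 = c] (mod 2^(Suc k + 3))"
        by (simp add: P_def power_add cong_iff_dvd_diff)
      then show ?thesis by blast
    qed
  qed
  show ?thesis
    unfolding square_mod_powers_def
  proof
    fix k :: nat
    obtain x where "[x^2 = c] (mod 2^(k+3))" using lift by blast
    moreover have "(2::int)^k dvd 2^(k+3)" by (simp add: power_add)
    ultimately show "\<exists>x. [x^2 = c] (mod 2^k)" using cong_dvd_modulus by blast
  qed
qed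

lemma Legendre_cases: "Legendre a p = 0 \<or> Legendre a p = 1 \<or> Legendre a p = -1"
  by (simp add: Legendre_def)

lemma Legendre_eq_0_iff: "Legendre a p = 0 \<longleftrightarrow> p dvd a"
  by (simp add: Legendre_def cong_0_iff)

lemma Legendre_unit: "\<not> p dvd a \<Longrightarrow> Legendre a p = 1 \<or> Legendre a p = -1"
  using Legendre_cases[of a p] Legendre_eq_0_iff[of a p] by auto

lemma Legendre_cong:
  assumes "[a = b] (mod p)"
  shows "Legendre a p = Legendre b p"
proof -
  have "QuadRes p a = QuadRes p b"
    unfolding QuadRes_def using assms cong_sym cong_trans by meson
  moreover have "[a = 0] (mod p) = [b = 0] (mod p)"
    using assms cong_sym cong_trans by meson
  ultimately show ?thesis by (simp add: Legendre_def)
qed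

lemma Legendre_mult:
  assumes "prime p" "p \<noteq> 2"
  shows "Legendre (a*b) p = Legendre a p * Legendre b p"
proof -
  have p2: "p > 2" using assms prime_ge_2_int[OF assms(1)] by simp
  define P where "P = nat p"
  have pP: "p = int P" using p2 by (simp add: P_def)
  have P: "prime P" "2 < P" using assms(1) p2 pP by simp_all
  let ?k = "(P - 1) div 2"
  have "[Legendre (a*b) p = (a*b)^?k] (mod p)"
    using euler_criterion[OF P] pP by simp
  moreover have "[Legendre a p * Legendre b p = a^?k * b^?k] (mod p)"
    using euler_criterion[OF P, of a] euler_criterion[OF P, of b] pP by (simp add: cong_mult)
  ultimately have "[Legendre (a*b) p = Legendre a p * Legendre b p] (mod p)"
    by (metis cong_sym cong_trans power_mult_distrib)
  then have "p dvd Legendre (a*b) p - Legendre a p * Legendre b p"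
    by (simp add: cong_iff_dvd_diff)
  text \<open>Both sides lie in \<open>{-1,0,1}\<close>, so they differ by at most \<open>2 < p\<close>.\<close>
  moreover have "\<bar>Legendre (a*b) p - Legendre a p * Legendre b p\<bar> \<le> 2"
    using Legendre_cases[of "a*b" p] Legendre_cases[of a p] Legendre_cases[of b p] by auto
  ultimately show ?thesis
    using p2 dvd_imp_le_int[of "Legendre (a*b) p - Legendre a p * Legendre b p" p] by fastforce
qed

lemma Legendre_1:
  assumes "prime p"
  shows "Legendre 1 p = 1"
proof -
  have "\<not> p dvd 1" using assms by (simp add: prime_int_iff)
  moreover have "QuadRes p 1" unfolding QuadRes_def by (metis cong_refl one_power2)
  ultimately show ?thesis by (simp add: Legendre_def cong_0_iff)
qed

lemma Legendre_prod:
  assumes "prime p" "p \<noteq> 2"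
  shows "Legendre (\<Prod>i\<in>A. f i) p = (\<Prod>i\<in>A. Legendre (f i) p)"
  by (induction A rule: infinite_finite_induct) (simp_all add: Legendre_1[OF assms(1)] Legendre_mult[OF assms])

lemma Legendre_square:
  assumes "prime p" "\<not> p dvd m"
  shows "Legendre (m^2) p = 1"
proof -
  have "\<not> p dvd m^2" using assms prime_dvd_power_iff by (metis zero_less_numeral)
  moreover have "QuadRes p (m^2)" unfolding QuadRes_def by (metis cong_refl)
  ultimately show ?thesis by (simp add: Legendre_def cong_0_iff)
qed

lemma Legendre_square_mult:
  assumes "prime p" "p \<noteq> 2" "\<not> p dvd m"
  shows "Legendre (m^2 * a) p = Legendre a p"
  using Legendre_mult[OF assms(1,2)] Legendre_square[OF assms(1,3)] by simp

lemma exists_Legendre_square_add_ne_1: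
  fixes p c :: int
  assumes p: "prime p" and c: "\<not> p dvd c"
  shows "\<exists>x. \<not> p dvd x \<and> Legendre (x^2 + c) p \<noteq> 1"
proof (rule ccontr)
  assume H: "\<not> ?thesis"
  text \<open>Otherwise the residues \<open>1 + k c\<close> would all be nonzero squares, but \<open>k = -c\<^sup>-\<^sup>1\<close> gives \<open>0\<close>.\<close>
  have all: "Legendre (1 + int k * c) p = 1" for k :: nat
  proof (induction k)
    case 0 then show ?case using Legendre_1[OF p] by simp
  next
    case (Suc k)
    then have "QuadRes p (1 + int k * c)" "\<not> p dvd (1 + int k * c)"
      by (auto simp: Legendre_def cong_0_iff split: if_splits)
    then obtain y where y: "[y^2 = 1 + int k * c] (mod p)" by (auto simp: QuadRes_def)
    have "\<not> p dvd y"
    proof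
      assume "p dvd y"
      then have "[y^2 = 0] (mod p)" by (simp add: cong_0_iff power2_eq_square)
      then have "[1 + int k * c = 0] (mod p)" using cong_trans[OF cong_sym[OF y]] by blast
      then show False using \<open>\<not> p dvd (1 + int k * c)\<close> by (simp add: cong_0_iff)
    qed
    then have "Legendre (y^2 + c) p = 1" using H by blast
    moreover have "[y^2 + c = 1 + int (Suc k) * c] (mod p)"
      using cong_add[OF y cong_refl[of c]] by (simp add: algebra_simps)
    ultimately show ?case using Legendre_cong by metis
  qed
  have "coprime p c" using p c by (intro prime_imp_coprime)
  then have "coprime c p" by (simp add: coprime_commute)
  then obtain u where u: "[c * u = 1] (mod p)" using cong_solve_coprime_int by blast
  define k where "k = nat ((- u) mod p)"
  have "[int k = - u] (mod p)"
    using prime_gt_0_int[OF p] by (simp add: k_def cong_def)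
  then have "[1 + int k * c = 1 - c * u] (mod p)"
    by (metis cong_add cong_mult cong_refl diff_conv_add_uminus mult.commute mult_minus_left)
  also have "[1 - c * u = 1 - 1] (mod p)" by (intro cong_diff cong_refl u)
  finally have "Legendre (1 + int k * c) p = 0" by (simp add: Legendre_eq_0_iff cong_0_iff)
  with all[of k] show False by simp
qed

section \<open>Local solubility of the quartics\<close>

definition locally_soluble :: "int \<Rightarrow> int \<Rightarrow> int \<Rightarrow> int \<Rightarrow> int \<Rightarrow> bool" where
  "locally_soluble l d e a b \<longleftrightarrow> (\<forall>k::nat. \<exists>U W Z. (\<not> l dvd U \<or> \<not> l dvd Z) \<and>
      [W^2 = d * (U^2 + a*e*Z^2) * (U^2 + b*e*Z^2)] (mod l^k))"

lemma locally_soluble_commute: "locally_soluble l d e a b = locally_soluble l d e b a"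
  unfolding locally_soluble_def by (simp add: mult.commute mult.left_commute)

lemma has_padic_point_if_locally_soluble:
  assumes "D = d * e" "locally_soluble l d e p q"
  shows "has_padic_point l ((p+q)*D) (p*q*D^2) d"
  unfolding has_padic_point_def
proof
  fix k :: nat
  obtain U W Z where UZ: "\<not> l dvd U \<or> \<not> l dvd Z"
    and c: "[W^2 = d * (U^2 + p*e*Z^2) * (U^2 + q*e*Z^2)] (mod l^k)"
    using assms(2) unfolding locally_soluble_def by blast
  have "quartic_form ((p+q)*D) (p*q*D^2) d U W Z
      = d * (W^2 - d * (U^2 + p*e*Z^2) * (U^2 + q*e*Z^2))"
    unfolding quartic_form_def assms(1) by (simp add: power2_eq_square power4_eq_xxxx algebra_simps)
  moreover have "l^k dvd W^2 - d * (U^2 + p*e*Z^2) * (U^2 + q*e*Z^2)"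
    using c by (simp add: cong_iff_dvd_diff)
  ultimately have "[quartic_form ((p+q)*D) (p*q*D^2) d U W Z = 0] (mod l^k)"
    by (simp add: cong_0_iff)
  with UZ show "\<exists>U W Z. (\<not> l dvd U \<or> \<not> l dvd Z) \<and> [quartic_form ((p+q)*D) (p*q*D^2) d U W Z = 0] (mod l^k)"
    by blast
qed

lemma locally_soluble_if_square_value:
  assumes "\<not> l dvd U \<or> \<not> l dvd Z"
    and "d * (U^2 + a*e*Z^2) * (U^2 + b*e*Z^2) = M^2 * R" and "square_mod_powers l R"
  shows "locally_soluble l d e a b"
  unfolding locally_soluble_def
proof
  fix k :: nat
  obtain w where "[w^2 = R] (mod l^k)" using assms(3) unfolding square_mod_powers_def by blast
  then have "[(M*w)^2 = d * (U^2 + a*e*Z^2) * (U^2 + b*e*Z^2)] (mod l^k)"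
    using assms(2) by (simp add: power_mult_distrib cong_mult)
  with assms(1) show "\<exists>U W Z. (\<not> l dvd U \<or> \<not> l dvd Z) \<and> [W^2 = d * (U^2 + a*e*Z^2) * (U^2 + b*e*Z^2)] (mod l^k)"
    by blast
qed

lemma locally_soluble_if_square_abscissa:
  assumes "prime l" "square_mod_powers l X"
    and "d * (X + a*e) * (X + b*e) = M^2 * R" and "square_mod_powers l R"
  shows "locally_soluble l d e a b"
  unfolding locally_soluble_def
proof
  fix k :: nat
  obtain w where w: "[w^2 = R] (mod l^k)" using assms(4) unfolding square_mod_powers_def by blast
  obtain U where U: "[U^2 = X] (mod l^k)" using assms(2) unfolding square_mod_powers_def by blast
  have "[(M*w)^2 = d * (X + a*e) * (X + b*e)] (mod l^k)"
    using w assms(3) by (simp add: power_mult_distrib cong_mult)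
  moreover have "[d * (U^2 + a*e*1^2) * (U^2 + b*e*1^2) = d * (X + a*e) * (X + b*e)] (mod l^k)"
    using U by (simp add: cong_add cong_mult)
  ultimately have "[(M*w)^2 = d * (U^2 + a*e*1^2) * (U^2 + b*e*1^2)] (mod l^k)"
    using cong_sym cong_trans by blast
  moreover have "\<not> l dvd 1" using assms(1) by (simp add: prime_int_iff)
  ultimately show "\<exists>U W Z. (\<not> l dvd U \<or> \<not> l dvd Z) \<and> [W^2 = d * (U^2 + a*e*Z^2) * (U^2 + b*e*Z^2)] (mod l^k)"
    by blast
qed

lemma locally_soluble_odd_if_Legendre_d:
  assumes "prime l" "l \<noteq> 2" "Legendre d l = 1"
  shows "locally_soluble l d e a b"
  by (rule locally_soluble_if_square_value[of l 1 0 d a e b 1 d])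
     (use assms square_mod_powers_if_Legendre_eq_1 in \<open>auto simp: prime_int_iff\<close>)

lemma locally_soluble_odd_if_Legendre_abd:
  assumes "prime l" "l \<noteq> 2" "Legendre (a*b*d) l = 1"
  shows "locally_soluble l d e a b"
  by (rule locally_soluble_if_square_value[of l 0 1 d a e b e "a*b*d"])
     (use assms square_mod_powers_if_Legendre_eq_1 in \<open>auto simp: prime_int_iff power2_eq_square algebra_simps\<close>)

lemma locally_soluble_odd_if_dvd_d:
  assumes l: "prime l" "l \<noteq> 2" and d: "d = l * d'" and L: "Legendre (-(a*e)) l = 1"
  shows "locally_soluble l d e a b"
proof -
  text \<open>\<open>X \<equiv> -a e (mod l)\<close> makes \<open>X + a e\<close> supply the second factor \<open>l\<close> needed next to \<open>d = l d'\<close>.\<close>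
  define X where "X = -(a*e) + l * ((b - a) * d' * e)"
  have "[X = -(a*e)] (mod l)" unfolding X_def by (simp add: cong_iff_dvd_diff)
  then have "square_mod_powers l X"
    using L Legendre_cong l square_mod_powers_if_Legendre_eq_1 by metis
  moreover have "[1 + l * d' = 1] (mod l)" by (simp add: cong_def)
  then have "square_mod_powers l (1 + l*d')"
    using Legendre_cong Legendre_1[OF l(1)] l square_mod_powers_if_Legendre_eq_1 by metis
  moreover have "d * (X + a*e) * (X + b*e) = (l * (b-a) * d' * e)^2 * (1 + l*d')"
    unfolding X_def d by (simp add: power2_eq_square algebra_simps)
  ultimately show ?thesis using locally_soluble_if_square_abscissa[OF l(1)] by blast
qed

lemma locally_soluble_odd_at_coefficient:
  assumes l: "prime l" "l \<noteq> 2" and nd: "\<not> l dvd d" "\<not> l dvd e" "\<not> l dvd m"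
  shows "locally_soluble l d e l m"
proof -
  consider "Legendre d l = 1" | "Legendre (-(m*e)) l = 1"
    | "Legendre d l \<noteq> 1" "Legendre (-(m*e)) l \<noteq> 1" by blast
  then show ?thesis
  proof cases
    case 1 then show ?thesis using locally_soluble_odd_if_Legendre_d l by blast
  next
    case 2
    define X where "X = -(m*e) + l^2 * ((l - m) * e * d)"
    have "[X = -(m*e)] (mod l)" unfolding X_def by (simp add: cong_iff_dvd_diff power2_eq_square)
    then have "square_mod_powers l X"
      using 2 Legendre_cong l square_mod_powers_if_Legendre_eq_1 by metis
    moreover have "[1 + l^2 * d = 1] (mod l)" by (simp add: cong_iff_dvd_diff power2_eq_square)
    then have "square_mod_powers l (1 + l^2*d)"
      using Legendre_cong Legendre_1[OF l(1)] l square_mod_powers_if_Legendre_eq_1 by metis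
    moreover have "d * (X + l*e) * (X + m*e) = (l * (l-m) * e * d)^2 * (1 + l^2*d)"
      unfolding X_def by (simp add: power2_eq_square algebra_simps)
    ultimately show ?thesis using locally_soluble_if_square_abscissa[OF l(1)] by blast
  next
    case 3
    text \<open>Now \<open>d\<close> and \<open>-m e\<close> are nonresidues; a unit \<open>x\<close> with \<open>x^2 + m e\<close> a nonresidue
      makes the value at \<open>(x,1)\<close> a residue.\<close>
    have "\<not> l dvd m*e" using nd l(1) by (simp add: prime_dvd_mult_iff)
    then obtain x where x: "\<not> l dvd x" "Legendre (x^2 + m*e) l \<noteq> 1"
      using exists_Legendre_square_add_ne_1[OF l(1)] by blast
    have "\<not> l dvd x^2 + m*e"
    proof
      assume "l dvd x^2 + m*e"
      then have "l dvd -(x^2 + m*e)" by (simp only: dvd_minus_iff)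
      then have "[-(m*e) = x^2] (mod l)" by (simp add: cong_iff_dvd_diff algebra_simps)
      then have "Legendre (-(m*e)) l = Legendre (x^2) l" by (rule Legendre_cong)
      then show False using 3 Legendre_square[OF l(1) x(1)] by simp
    qed
    then have "Legendre (x^2 + m*e) l = -1" using Legendre_unit x(2) by blast
    moreover have "Legendre d l = -1" using Legendre_unit[OF nd(1)] 3 by blast
    moreover have "[x^2 + l*e = x^2] (mod l)" by (simp add: cong_def)
    then have "Legendre (x^2 + l*e) l = 1" using Legendre_cong Legendre_square[OF l(1) x(1)] by simp
    ultimately have "Legendre (d * (x^2 + l*e*1^2) * (x^2 + m*e*1^2)) l = 1"
      using Legendre_mult[OF l] by simp
    then have "square_mod_powers l (d * (x^2 + l*e*1^2) * (x^2 + m*e*1^2))"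
      using square_mod_powers_if_Legendre_eq_1 l by blast
    then show ?thesis
      by (intro locally_soluble_if_square_value[of l x 1 d l e m 1]) (use x(1) in auto)
  qed
qed

lemma locally_soluble_2_if_d_cong_1:
  assumes "[d = 1] (mod 8)"
  shows "locally_soluble 2 d e a b"
  by (rule locally_soluble_if_square_value[of 2 1 0 d a e b 1 d])
     (use assms square_mod_powers_2_if_cong_1_mod_8 in auto)

lemma locally_soluble_2_if_abd_cong_1:
  assumes "[a*b*d = 1] (mod 8)"
  shows "locally_soluble 2 d e a b"
  by (rule locally_soluble_if_square_value[of 2 0 1 d a e b e "a*b*d"])
     (use assms square_mod_powers_2_if_cong_1_mod_8 in \<open>auto simp: power2_eq_square algebra_simps\<close>)

lemma odd_mod_8_cases:
  fixes x :: int
  assumes "odd x"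
  shows "x mod 8 \<in> {1,3,5,7}"
  using assms by simp presburger

lemma locally_soluble_2_if_ae_cong_7:
  assumes "odd d" "odd e" "s = 1 \<or> s = -1" "b = a + 2*s" "[a*e = 7] (mod 8)"
  shows "locally_soluble 2 d e a b"
proof -
  define t where "t = d * (4 + s*e)"
  define X where "X = -(a*e) + 8 * t"
  have "[X = -(a*e)] (mod 8)" unfolding X_def by (simp add: cong_iff_dvd_diff)
  moreover have "[-(a*e) = 1] (mod 8)" using assms(5) by (simp add: cong_def) presburger
  ultimately have X: "square_mod_powers 2 X"
    using cong_trans square_mod_powers_2_if_cong_1_mod_8 by blast
  define R where "R = d * t * (4 * t + s*e)"
  have "[R = (d mod 8) * ((d mod 8) * (4 + s*(e mod 8))) * (4 * ((d mod 8) * (4 + s*(e mod 8))) + s*(e mod 8))] (mod 8)"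
    unfolding R_def t_def by (intro cong_mult cong_add cong_refl) (simp_all add: cong_def)
  moreover have "[(d mod 8) * ((d mod 8) * (4 + s*(e mod 8))) * (4 * ((d mod 8) * (4 + s*(e mod 8))) + s*(e mod 8)) = 1] (mod 8)"
    using odd_mod_8_cases[OF assms(1)] odd_mod_8_cases[OF assms(2)] assms(3)
    by (auto simp: cong_def)
  ultimately have R: "square_mod_powers 2 R"
    using cong_trans square_mod_powers_2_if_cong_1_mod_8 by blast
  have "d * (X + a*e) * (X + b*e) = 4^2 * R"
    unfolding X_def R_def assms(4) by (simp add: power2_eq_square algebra_simps)
  from locally_soluble_if_square_abscissa[OF _ X this R] show ?thesis by simp
qed

section \<open>The 2-adic condition\<close>

definition one_or_pq_mod_8 :: "int \<Rightarrow> int \<Rightarrow> bool" where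
  "one_or_pq_mod_8 p x \<longleftrightarrow> [x = 1] (mod 8) \<or> [x = p*(p+2)] (mod 8)"

lemma square_pq_cong_1_mod_8:
  assumes "odd (p::int)"
  shows "[(p*(p+2))^2 = 1] (mod 8)"
proof -
  have "[(p*(p+2))^2 = ((p mod 8)*(p mod 8 + 2))^2] (mod 8)"
    by (intro cong_pow cong_mult cong_add cong_refl) (simp_all add: cong_def)
  moreover have "(r*(r + 2))^2 mod 8 = 1" if "r \<in> {1,3,5,7}" for r :: int
    using that by (elim insertE; simp)
  then have "((p mod 8)*(p mod 8 + 2))^2 mod 8 = 1" using odd_mod_8_cases[OF assms] .
  ultimately show ?thesis by (simp add: cong_def)
qed

lemma one_or_pq_mod_8_mult:
  assumes "odd p" "one_or_pq_mod_8 p x" "one_or_pq_mod_8 p y"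
  shows "one_or_pq_mod_8 p (x*y)"
proof -
  define g where "g = p*(p+2)"
  have x: "[x = 1] (mod 8) \<or> [x = g] (mod 8)" and y: "[y = 1] (mod 8) \<or> [y = g] (mod 8)"
    using assms(2,3) unfolding one_or_pq_mod_8_def g_def by simp_all
  have "[x*y = 1*1] (mod 8) \<or> [x*y = g*1] (mod 8) \<or> [x*y = 1*g] (mod 8) \<or> [x*y = g*g] (mod 8)"
    using x y by (meson cong_mult)
  moreover have "[g*g = 1] (mod 8)"
    using square_pq_cong_1_mod_8[OF assms(1)] by (simp add: g_def power2_eq_square)
  ultimately show ?thesis
    unfolding one_or_pq_mod_8_def g_def[symmetric] using cong_trans by auto
qed

lemma one_or_pq_mod_8_prod:
  assumes "odd p" "\<And>i. i \<in> A \<Longrightarrow> one_or_pq_mod_8 p (f i)"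
  shows "one_or_pq_mod_8 p (\<Prod>i\<in>A. f i)"
  using assms(2)
proof (induction A rule: infinite_finite_induct)
  case (insert x F)
  then show ?case by (simp add: one_or_pq_mod_8_mult[OF assms(1)])
qed (simp_all add: one_or_pq_mod_8_def)

lemma one_or_pq_mod_8_if_cong_3_or_7:
  fixes p f :: int
  assumes "odd p" "([f = 3] (mod 8) \<and> [p = 1] (mod 4)) \<or> ([f = 7] (mod 8) \<and> [p = 3] (mod 4))"
  shows "one_or_pq_mod_8 p f"
proof -
  define rp where "rp = p mod 8"
  have rp: "rp \<in> {1,3,5,7}" unfolding rp_def by (rule odd_mod_8_cases[OF assms(1)])
  have "p mod 4 = rp mod 4" unfolding rp_def by (simp add: mod_mod_cancel)
  then have "(f mod 8 = 3 \<and> rp mod 4 = 1) \<or> (f mod 8 = 7 \<and> rp mod 4 = 3)"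
    using assms(2) by (simp add: cong_def)
  then have "f mod 8 = (rp*(rp+2)) mod 8"
    using rp unfolding insert_iff empty_iff by (elim disjE) simp_all
  moreover have "[p*(p+2) = rp*(rp+2)] (mod 8)"
    unfolding rp_def by (intro cong_mult cong_add cong_refl) (simp_all add: cong_def)
  ultimately show ?thesis by (simp add: one_or_pq_mod_8_def cong_def)
qed

lemma locally_soluble_2_if_one_or_pq_mod_8:
  assumes "odd p" "one_or_pq_mod_8 p d"
  shows "locally_soluble 2 d e p (p+2)"
  using assms(2) unfolding one_or_pq_mod_8_def
proof
  assume "[d = 1] (mod 8)"
  then show ?thesis by (rule locally_soluble_2_if_d_cong_1)
next
  assume "[d = p*(p+2)] (mod 8)"
  then have "[p*(p+2)*d = (p*(p+2))^2] (mod 8)"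
    by (metis cong_scalar_left power2_eq_square)
  then have "[p*(p+2)*d = 1] (mod 8)"
    using square_pq_cong_1_mod_8[OF assms(1)] cong_trans by blast
  then show ?thesis by (rule locally_soluble_2_if_abd_cong_1)
qed

text \<open>A condition on the product \<open>D\<close> alone: this is what lets the mod-16 condition, which
  concerns the splitting \<open>D = D\<^sub>i (D/D\<^sub>i)\<close>, be used for the splitting \<open>D = d e\<close>.\<close>
definition two_adic_admissible :: "int \<Rightarrow> int \<Rightarrow> bool" where
  "two_adic_admissible p D \<longleftrightarrow>
     (p mod 4 = 1 \<and> (p*D) mod 8 \<in> {1,3}) \<or> (p mod 4 = 3 \<and> (p*D) mod 8 \<in> {3,5})"

lemma odd_mod_16_cases:
  fixes x :: int
  assumes "odd x"
  shows "x mod 16 \<in> {1,3,5,7,9,11,13,15}"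
  using assms by simp presburger

lemma two_adic_admissible_if_cong_0_mod_16:
  fixes p f g :: int
  assumes "odd p" "odd f" "odd g" "[(1+p*g)*(1+(p+2)*g) = 0] (mod 16)" "\<not> one_or_pq_mod_8 p f"
  shows "two_adic_admissible p (f*g)"
proof -
  define rp where "rp = p mod 16"
  define rg where "rg = g mod 16"
  define rf where "rf = f mod 8"
  have r: "rp \<in> {1,3,5,7,9,11,13,15}" "rg \<in> {1,3,5,7,9,11,13,15}" "rf \<in> {1,3,5,7}"
    unfolding rp_def rg_def rf_def using assms(1-3) odd_mod_16_cases odd_mod_8_cases by auto
  have "[(1+p*g)*(1+(p+2)*g) = (1+rp*rg)*(1+(rp+2)*rg)] (mod 16)"
    unfolding rp_def rg_def by (intro cong_mult cong_add cong_refl) (simp_all add: cong_def)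
  then have h16: "((1+rp*rg)*(1+(rp+2)*rg)) mod 16 = 0"
    using assms(4) by (simp add: cong_def)
  have c8: "[p = rp] (mod 8)" "[g = rg] (mod 8)" "[f = rf] (mod 8)"
    unfolding rp_def rg_def rf_def by (simp_all add: cong_def mod_mod_cancel)
  have "[p*(p+2) = rp*(rp+2)] (mod 8)"
    by (intro cong_mult cong_add cong_refl c8)
  then have h8: "rf \<noteq> 1" "rf \<noteq> (rp*(rp+2)) mod 8"
    using assms(5) c8(3) unfolding one_or_pq_mod_8_def rf_def by (auto simp: cong_def)
  have "[p*(f*g) = rp*rf*rg] (mod 8)"
    unfolding mult.assoc by (intro cong_mult cong_refl c8)
  moreover have "p mod 4 = rp mod 4" unfolding rp_def by (simp add: mod_mod_cancel)
  moreover have "(rp mod 4 = 1 \<and> (rp*rf*rg) mod 8 \<in> {1,3}) \<or> (rp mod 4 = 3 \<and> (rp*rf*rg) mod 8 \<in> {3,5})"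
    using r unfolding insert_iff empty_iff by (elim disjE; use h16 h8 in simp)
  ultimately show ?thesis unfolding two_adic_admissible_def cong_def by simp
qed

lemma two_adic_admissible_splitting:
  fixes p d e :: int
  assumes "odd p" "odd d" "odd e" "two_adic_admissible p (d*e)"
  shows "one_or_pq_mod_8 p d \<or> [p*e = 7] (mod 8) \<or> [(p+2)*e = 7] (mod 8)"
proof -
  define rp where "rp = p mod 8"
  define rd where "rd = d mod 8"
  define re where "re = e mod 8"
  have r: "rp \<in> {1,3,5,7}" "rd \<in> {1,3,5,7}" "re \<in> {1,3,5,7}"
    unfolding rp_def rd_def re_def using assms(1-3) odd_mod_8_cases by auto
  have c8: "[p = rp] (mod 8)" "[d = rd] (mod 8)" "[e = re] (mod 8)"
    unfolding rp_def re_def rd_def by (simp_all add: cong_def)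
  have "[p*(d*e) = rp*(rd*re)] (mod 8)" "p mod 4 = rp mod 4"
    unfolding rp_def by (intro cong_mult cong_refl c8[unfolded rp_def]) (simp add: mod_mod_cancel)
  then have "(rp mod 4 = 1 \<and> (rp*(rd*re)) mod 8 \<in> {1,3}) \<or> (rp mod 4 = 3 \<and> (rp*(rd*re)) mod 8 \<in> {3,5})"
    using assms(4) unfolding two_adic_admissible_def cong_def by simp
  then have "rd = 1 \<or> rd = (rp*(rp+2)) mod 8 \<or> (rp*re) mod 8 = 7 \<or> ((rp+2)*re) mod 8 = 7"
    using r unfolding insert_iff empty_iff by (elim disjE) simp_all
  moreover have "[p*(p+2) = rp*(rp+2)] (mod 8)" "[p*e = rp*re] (mod 8)"
    "[(p+2)*e = (rp+2)*re] (mod 8)"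
    by (intro cong_mult cong_add cong_refl c8)+
  ultimately show ?thesis
    unfolding one_or_pq_mod_8_def cong_def rd_def by (elim disjE) simp_all
qed

lemma locally_soluble_2_prod:
  fixes p d e D :: int and A :: "nat set" and f :: "nat \<Rightarrow> int"
  assumes p: "odd p" and d: "d = (\<Prod>i\<in>A. f i)" and D: "D = d * e" "odd D"
    and I: "\<And>i. i \<in> A \<Longrightarrow> f i dvd D \<and>
       ([f i = 1] (mod 8)
      \<or> [(1 + p * (D div f i)) * (1 + (p+2) * (D div f i)) = 0] (mod 16)
      \<or> ([f i = 3] (mod 8) \<and> [p = 1] (mod 4))
      \<or> ([f i = 7] (mod 8) \<and> [p = 3] (mod 4)))"
  shows "locally_soluble 2 d e p (p+2)"
proof (cases "\<forall>i\<in>A. one_or_pq_mod_8 p (f i)")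
  case True
  then show ?thesis
    unfolding d by (intro locally_soluble_2_if_one_or_pq_mod_8 one_or_pq_mod_8_prod p) auto
next
  case False
  then obtain i where i: "i \<in> A" "\<not> one_or_pq_mod_8 p (f i)" by auto
  obtain g where g: "D = f i * g" using I[OF i(1)] by (auto simp: dvd_def)
  have odd_fg: "odd (f i)" "odd g" using D(2) unfolding g by simp_all
  have odd_de: "odd d" "odd e" using D by simp_all
  have "f i \<noteq> 0" using odd_fg(1) by auto
  then have "D div f i = g" using g by simp
  moreover have "\<not> [f i = 1] (mod 8)"
    "\<not> (([f i = 3] (mod 8) \<and> [p = 1] (mod 4)) \<or> ([f i = 7] (mod 8) \<and> [p = 3] (mod 4)))"
    using i(2) one_or_pq_mod_8_if_cong_3_or_7[OF p] by (auto simp: one_or_pq_mod_8_def)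
  ultimately have "[(1 + p * g) * (1 + (p+2) * g) = 0] (mod 16)"
    using I[OF i(1)] by auto
  then have "two_adic_admissible p (d*e)"
    using two_adic_admissible_if_cong_0_mod_16[OF p odd_fg _ i(2)] g D(1) by simp
  then consider "one_or_pq_mod_8 p d" | "[p*e = 7] (mod 8)" | "[(p+2)*e = 7] (mod 8)"
    using two_adic_admissible_splitting[OF p odd_de] by blast
  then show ?thesis
  proof cases
    case 1
    then show ?thesis by (rule locally_soluble_2_if_one_or_pq_mod_8[OF p])
  next
    case 2
    then show ?thesis by (intro locally_soluble_2_if_ae_cong_7[where s=1, OF odd_de]) simp_all
  next
    case 3
    have "locally_soluble 2 d e (p+2) p"
      by (rule locally_soluble_2_if_ae_cong_7[where s="-1", OF odd_de _ _ 3]) simp_all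
    then show ?thesis using locally_soluble_commute by blast
  qed
qed

section \<open>Counting, square classes and Selmer membership\<close>

lemma Legendre_factor_nonneg: "0 \<le> (1 - Legendre a p) * (1 - Legendre b p)"
  using Legendre_cases[of a p] Legendre_cases[of b p] by auto

lemma Pi_plus'_nonneg: "Pi_plus' p q n Ds i \<ge> 0"
  unfolding Pi_plus'_def Let_def
  by (intro add_nonneg_nonneg Legendre_factor_nonneg sum_nonneg)

lemma Pi_plus'_eq_0_imp:
  assumes "Pi_plus' p q n Ds i = 0"
  shows "Legendre (- p * ((\<Prod>j\<in>{1..n}. Ds j) div Ds i)) (Ds i) = 1
           \<or> Legendre (- q * ((\<Prod>j\<in>{1..n}. Ds j) div Ds i)) (Ds i) = 1"
    and "j \<in> {1..n} - {i} \<Longrightarrow> Legendre (Ds i) (Ds j) = 1 \<or> Legendre (p * q * Ds i) (Ds j) = 1"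
proof -
  define a where "a = (1 - Legendre (- p * ((\<Prod>j\<in>{1..n}. Ds j) div Ds i)) (Ds i))
       * (1 - Legendre (- q * ((\<Prod>j\<in>{1..n}. Ds j) div Ds i)) (Ds i))"
  define b where "b = (\<lambda>j. (1 - Legendre (Ds i) (Ds j)) * (1 - Legendre (p * q * Ds i) (Ds j)))"
  have "a + (\<Sum>j\<in>{1..n} - {i}. b j) = 0"
    using assms unfolding Pi_plus'_def Let_def a_def b_def .
  moreover have "a \<ge> 0" "\<And>j. b j \<ge> 0" unfolding a_def b_def by (rule Legendre_factor_nonneg)+
  moreover from this(2) have "(\<Sum>j\<in>{1..n} - {i}. b j) \<ge> 0" by (rule sum_nonneg)
  ultimately have "a = 0" "(\<Sum>j\<in>{1..n} - {i}. b j) = 0" by linarith+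
  then show "Legendre (- p * ((\<Prod>j\<in>{1..n}. Ds j) div Ds i)) (Ds i) = 1
           \<or> Legendre (- q * ((\<Prod>j\<in>{1..n}. Ds j) div Ds i)) (Ds i) = 1"
    by (simp_all add: a_def)
  assume "j \<in> {1..n} - {i}"
  with \<open>(\<Sum>j\<in>{1..n} - {i}. b j) = 0\<close> \<open>\<And>j. b j \<ge> 0\<close> have "b j = 0"
    by (simp add: sum_nonneg_eq_0_iff)
  then show "Legendre (Ds i) (Ds j) = 1 \<or> Legendre (p * q * Ds i) (Ds j) = 1"
    by (simp add: b_def)
qed

lemma floor_inverse_1_plus:
  assumes "(x::int) \<ge> 0"
  shows "\<lfloor>1 / (1 + real_of_int x)\<rfloor> = (if x = 0 then 1 else 0)"
  using assms by (auto simp: floor_eq_iff divide_simps)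

lemma rho_plus'_eq_card:
  "rho_plus' p q n Ds = int (card {i \<in> I_set p q n Ds. Pi_plus' p q n Ds i = 0})"
proof -
  have "finite (I_set p q n Ds)" unfolding I_set_def by simp
  then show ?thesis
    unfolding rho_plus'_def floor_inverse_1_plus[OF Pi_plus'_nonneg]
    by (simp add: sum.inter_filter[symmetric])
qed

lemma squarefree_eq_if_square_multiple:
  fixes d m :: int and r :: rat
  assumes "squarefree d" "squarefree m" "r \<noteq> 0" "of_int d * r^2 = of_int m"
  shows "d = m"
proof -
  obtain a b where ab: "quotient_of r = (a, b)" by (cases "quotient_of r")
  have r: "r = of_int a / of_int b" and b0: "b > 0" and cop: "coprime (a^2) (b^2)"
    using quotient_of_div[OF ab] quotient_of_denom_pos[OF ab] quotient_of_coprime[OF ab] by auto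
  have "of_int (d * a^2) = (of_int (m * b^2) :: rat)"
    using assms(4) b0 unfolding r by (simp add: field_simps power2_eq_square)
  then have eq: "d * a^2 = m * b^2" by (simp only: of_int_eq_iff)
  then have "a^2 dvd m * b^2" "b^2 dvd d * a^2" by (metis dvd_triv_right)+
  then have "a^2 dvd m" "b^2 dvd d"
    using cop by (simp_all add: coprime_commute coprime_dvd_mult_left_iff)
  then have "a dvd 1" "b dvd 1" using assms(1,2) squarefreeD by blast+
  then have "\<bar>a\<bar> = 1" "b = 1" using b0 by auto
  then have "a^2 = 1" "b^2 = 1" by (metis power2_abs one_power2)+
  then show ?thesis using eq by simp
qed

lemma prime_dvd_prod_primes_iff:
  fixes U :: "int set"
  assumes "finite U" "\<forall>y\<in>U. prime y" "prime x"
  shows "x dvd \<Prod>U \<longleftrightarrow> x \<in> U"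
proof
  assume "x dvd \<Prod>U"
  then obtain y where "y \<in> U" "x dvd y" using prime_dvd_prod_iff[OF assms(1,3)] by auto
  then show "x \<in> U" using primes_dvd_imp_eq[OF assms(3)] assms(2) by blast
qed (use assms(1) dvd_prodI[of U _ "\<lambda>y. y"] in simp)

lemma squarefree_prod_primes:
  fixes U :: "int set"
  assumes "\<forall>y\<in>U. prime y"
  shows "squarefree (\<Prod>U)"
  using assms by (intro squarefree_prod_coprime) (auto intro: primes_coprime squarefree_prime)

lemma gen_sq_primes:
  fixes T :: "int set"
  assumes "\<forall>y\<in>T. prime y"
  shows "gen_sq T = (\<lambda>U. \<Prod>U) ` Pow T"
proof
  show "gen_sq T \<subseteq> (\<lambda>U. \<Prod>U) ` Pow T"
  proof
    fix d assume "d \<in> gen_sq T"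
    then obtain U and r :: rat where d: "squarefree d" and U: "U \<subseteq> T"
      and r: "r \<noteq> 0" "of_int d * r^2 = of_int (\<Prod>U)"
      unfolding gen_sq_def by blast
    have "squarefree (\<Prod>U)" using U assms by (intro squarefree_prod_primes) blast
    from squarefree_eq_if_square_multiple[OF d this r] have "d = \<Prod>U" .
    with U show "d \<in> (\<lambda>U. \<Prod>U) ` Pow T" by blast
  qed
next
  show "(\<lambda>U. \<Prod>U) ` Pow T \<subseteq> gen_sq T"
  proof
    fix d assume "d \<in> (\<lambda>U. \<Prod>U) ` Pow T"
    then obtain U where U: "U \<subseteq> T" "d = \<Prod>U" by blast
    then have primes: "\<forall>y\<in>U. prime y" using assms by blast
    then have "d > 0" unfolding U(2) by (intro prod_pos) (auto intro: prime_gt_0_int)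
    moreover have "squarefree d" unfolding U(2) using primes by (rule squarefree_prod_primes)
    moreover have "\<exists>U\<subseteq>T. \<exists>r::rat. r \<noteq> 0 \<and> of_int d * r^2 = of_int (\<Prod>U)"
      using U by (intro exI[of _ U] conjI exI[of _ "1::rat"]) simp_all
    ultimately show "d \<in> gen_sq T" unfolding gen_sq_def by simp
  qed
qed

lemma prod_primes_subset_if_dvd:
  fixes U V :: "int set"
  assumes "finite U" "finite V" "\<forall>y\<in>U. prime y" "\<forall>y\<in>V. prime y" "\<Prod>U dvd \<Prod>V"
  shows "U \<subseteq> V"
proof
  fix x assume x: "x \<in> U"
  then have px: "prime x" using assms(3) by blast
  have "x dvd \<Prod>U" using prime_dvd_prod_primes_iff[OF assms(1,3) px] x by simp
  then have "x dvd \<Prod>V" using assms(5) by (rule dvd_trans)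
  then show "x \<in> V" using prime_dvd_prod_primes_iff[OF assms(2,4) px] by simp
qed

lemma inj_on_prod_primes:
  fixes T :: "int set"
  assumes "finite T" "\<forall>y\<in>T. prime y"
  shows "inj_on (\<lambda>U. \<Prod>U) (Pow T)"
proof (rule inj_onI)
  fix U V assume UV: "U \<in> Pow T" "V \<in> Pow T" "\<Prod>U = \<Prod>V"
  have UV': "finite U" "finite V" "\<forall>y\<in>U. prime y" "\<forall>y\<in>V. prime y"
    using UV(1,2) assms finite_subset by auto
  have "U \<subseteq> V" using prod_primes_subset_if_dvd[OF UV'] UV(3) by simp
  moreover have "V \<subseteq> U" using prod_primes_subset_if_dvd[OF UV'(2,1,4,3)] UV(3) by simp
  ultimately show "U = V" by (rule subset_antisym)
qed

lemma card_gen_sq_primes: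
  fixes T :: "int set"
  assumes "finite T" "\<forall>y\<in>T. prime y"
  shows "card (gen_sq T) = 2 ^ card T"
  using card_image[OF inj_on_prod_primes[OF assms]] card_Pow[of T] assms
  by (simp add: gen_sq_primes)

lemma finite_squarefree_with_prime_divisors_in:
  fixes P :: "int set"
  assumes "finite P"
  shows "finite {d. d \<noteq> 0 \<and> squarefree d \<and> (\<forall>r. prime r \<and> r dvd d \<longrightarrow> r \<in> P)}"
proof -
  define M where "M = \<Prod>{r \<in> P. prime r}"
  have M: "M \<noteq> 0" "\<And>r. r \<in> P \<Longrightarrow> prime r \<Longrightarrow> r dvd M"
    using assms by (auto simp: M_def intro: dvd_prodI)
  have "d dvd M" if d: "d \<noteq> 0" "squarefree d" "\<forall>r. prime r \<and> r dvd d \<longrightarrow> r \<in> P" for d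
  proof (rule multiplicity_le_imp_dvd[OF d(1)])
    fix r :: int assume r: "prime r"
    show "multiplicity r d \<le> multiplicity r M"
    proof (cases "r dvd d")
      case True
      then have "r dvd M" using d(3) r M(2) by blast
      then have "multiplicity r M > 0"
        using prime_multiplicity_gt_zero_iff[OF prime_imp_prime_elem[OF r] M(1)] by simp
      moreover have "multiplicity r d \<le> 1"
        using d(2) squarefree_factorial_semiring''[OF d(1)] r by blast
      ultimately show ?thesis by simp
    qed (simp add: not_dvd_imp_multiplicity_0)
  qed
  then have "{d. d \<noteq> 0 \<and> squarefree d \<and> (\<forall>r. prime r \<and> r dvd d \<longrightarrow> r \<in> P)} \<subseteq> {d. d dvd M}"
    by blast
  moreover have "finite {d. d dvd M}" using M(1) by simp
  ultimately show ?thesis by (rule finite_subset)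
qed

lemma finite_selmer_hat:
  assumes "finite Ps"
  shows "finite (selmer_hat p q D Ps)"
proof -
  have "selmer_hat p q D Ps \<subseteq>
      {d. d \<noteq> 0 \<and> squarefree d \<and> (\<forall>r. prime r \<and> r dvd d \<longrightarrow> r \<in> {2, p, q} \<union> Ps)}"
    unfolding selmer_hat_def by blast
  moreover have "finite ({2, p, q} \<union> Ps)" using assms by simp
  ultimately show ?thesis using finite_squarefree_with_prime_divisors_in finite_subset by blast
qed

lemma has_real_point_if_pos:
  assumes "d > 0"
  shows "has_real_point A B d"
  unfolding has_real_point_def
proof (intro exI conjI)
  show "((1::real), (0::real)) \<noteq> (0, 0)" by simp
  show "real_of_int d * (sqrt (real_of_int d))^2
      = (real_of_int d)^2 * 1^4 + real_of_int A * real_of_int d * 1^2 * 0^2 + real_of_int B * 0^4"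
    using assms by (simp add: power2_eq_square)
qed

lemma selmer_hat_memI:
  assumes "d > 0" "squarefree d" "\<forall>r. prime r \<and> r dvd d \<longrightarrow> r \<in> {2, p, q} \<union> Ps" "D = d * e"
    and "\<And>l. l \<in> {2, p, q} \<union> Ps \<Longrightarrow> locally_soluble l d e p q"
  shows "d \<in> selmer_hat p q D Ps"
  unfolding selmer_hat_def
proof (intro CollectI conjI ballI)
  show "has_real_point ((p + q) * D) (p * q * D^2) d" using assms(1) by (rule has_real_point_if_pos)
  show "has_padic_point l ((p + q) * D) (p * q * D^2) d" if "l \<in> {2, p, q} \<union> Ps" for l
    using has_padic_point_if_locally_soluble[OF assms(4) assms(5)[OF that]] .
qed (use assms(1-3) in simp_all)

lemma Legendre_eq_1_if_mult_eq_neg1: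
  assumes "prime l" "l \<noteq> 2" "Legendre (a*b) l = -1"
  shows "Legendre a l = 1 \<or> Legendre b l = 1"
  using assms(3) Legendre_mult[OF assms(1,2)] Legendre_cases[of a l] Legendre_cases[of b l] by auto

section \<open>The twin prime setting\<close>

locale twin_prime_data =
  fixes p q :: int and n :: nat and Ds :: "nat \<Rightarrow> int"
  assumes prime_p: "prime p" and prime_q: "prime q" and odd_p: "odd p" and odd_q: "odd q"
    and q_eq: "q - p = 2"
    and prime_Ds: "\<forall>i\<in>{1..n}. prime (Ds i)" and inj_Ds: "inj_on Ds {1..n}"
    and odd_D: "\<not> 2 dvd (\<Prod>i\<in>{1..n}. Ds i)"
    and p_not_dvd_D: "\<not> p dvd (\<Prod>i\<in>{1..n}. Ds i)"
    and q_not_dvd_D: "\<not> q dvd (\<Prod>i\<in>{1..n}. Ds i)"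
begin

abbreviation D :: int where "D \<equiv> \<Prod>i\<in>{1..n}. Ds i"

definition Pi_zero_indices :: "nat set" where
  "Pi_zero_indices = {i \<in> I_set p q n Ds. Pi_plus' p q n Ds i = 0}"

lemma Pi_zero_indices_subset: "Pi_zero_indices \<subseteq> {1..n}"
  unfolding Pi_zero_indices_def I_set_def by auto

lemma Ds_dvd_D: "i \<in> {1..n} \<Longrightarrow> Ds i dvd D"
  by (rule dvd_prodI) simp_all

lemma Ds_prime_odd:
  assumes "i \<in> {1..n}"
  shows "prime (Ds i)" "Ds i \<noteq> 2"
  using prime_Ds assms Ds_dvd_D[OF assms] odd_D by auto

lemma Ds_not_dvd_pq:
  assumes "i \<in> {1..n}"
  shows "\<not> Ds i dvd p * q"
proof
  assume "Ds i dvd p * q"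
  then have "Ds i = p \<or> Ds i = q"
    using Ds_prime_odd(1)[OF assms] prime_p prime_q
    by (metis prime_dvd_mult_iff primes_dvd_imp_eq)
  then show False using Ds_dvd_D[OF assms] p_not_dvd_D q_not_dvd_D by auto
qed

lemma Ds_dvd_prod_iff:
  assumes "B \<subseteq> {1..n}" "i \<in> {1..n}"
  shows "Ds i dvd (\<Prod>j\<in>B. Ds j) \<longleftrightarrow> i \<in> B"
proof
  have fB: "finite B" using assms(1) finite_subset by blast
  assume "Ds i dvd (\<Prod>j\<in>B. Ds j)"
  then obtain j where j: "j \<in> B" "Ds i dvd Ds j"
    using prime_dvd_prod_iff[OF fB Ds_prime_odd(1)[OF assms(2)]] by auto
  moreover have "j \<in> {1..n}" using j(1) assms(1) by blast
  ultimately have "Ds i = Ds j"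
    using primes_dvd_imp_eq[OF Ds_prime_odd(1)[OF assms(2)] Ds_prime_odd(1)] by blast
  then show "i \<in> B" using inj_Ds assms j(1) by (metis inj_on_def subsetD)
qed (use assms(1) finite_subset in \<open>auto intro: dvd_prodI\<close>)

lemma D_split: "B \<subseteq> {1..n} \<Longrightarrow> D = (\<Prod>j\<in>B. Ds j) * (\<Prod>j\<in>{1..n}-B. Ds j)"
  using prod.subset_diff[of B "{1..n}" Ds] by (simp add: mult.commute)

lemma Legendre_Ds_eq_1:
  assumes "k \<in> Pi_zero_indices" "j \<in> {1..n}" "j \<noteq> k" "Legendre (p*q) (Ds j) = 1"
  shows "Legendre (Ds k) (Ds j) = 1"
proof -
  have "Legendre (p * q * Ds k) (Ds j) = Legendre (Ds k) (Ds j)"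
    using Legendre_mult[OF Ds_prime_odd[OF assms(2)]] assms(4) by simp
  then show ?thesis
    using assms(1-3) Pi_plus'_eq_0_imp(2)[of p q n Ds k j] unfolding Pi_zero_indices_def by auto
qed

lemma locally_soluble_at_Ds_mem:
  assumes U: "U \<subseteq> Pi_zero_indices" and j: "j \<in> U"
  shows "locally_soluble (Ds j) (\<Prod>i\<in>U. Ds i) (\<Prod>i\<in>{1..n}-U. Ds i) p q"
proof -
  define l where "l = Ds j"
  define d' where "d' = (\<Prod>i\<in>U-{j}. Ds i)"
  define e where "e = (\<Prod>i\<in>{1..n}-U. Ds i)"
  have Un: "U \<subseteq> {1..n}" and jn: "j \<in> {1..n}" using U j Pi_zero_indices_subset by auto
  have l: "prime l" "l \<noteq> 2" unfolding l_def using Ds_prime_odd[OF jn] by auto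
  have d: "(\<Prod>i\<in>U. Ds i) = l * d'"
    unfolding d'_def l_def using prod.remove[OF finite_subset[OF Un] j] by simp
  have "\<not> l dvd e" unfolding l_def e_def using Ds_dvd_prod_iff[of "{1..n}-U" j] j jn by auto
  have "D div l = d' * e" using D_split[OF Un] d l by (simp add: e_def)
  then have "Legendre (- p * (d' * e)) l = 1 \<or> Legendre (- q * (d' * e)) l = 1"
    using Pi_plus'_eq_0_imp(1)[of p q n Ds j] U j unfolding Pi_zero_indices_def l_def by auto
  have "Legendre (-(p*e)) l = 1 \<or> Legendre (-(q*e)) l = 1"
  proof (cases "Legendre (p*q) l = 1")
    case True
    text \<open>Every factor of \<open>d'\<close> is a residue mod \<open>l\<close>, so \<open>d'\<close> can be cancelled.\<close>
    have "Legendre d' l = (\<Prod>i\<in>U-{j}. Legendre (Ds i) l)"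
      unfolding d'_def by (rule Legendre_prod[OF l])
    also have "\<dots> = 1"
      using Legendre_Ds_eq_1[OF _ jn _ True[unfolded l_def]] U unfolding l_def
      by (intro prod.neutral) blast
    finally have "Legendre d' l = 1" .
    then have "Legendre (- x * (d' * e)) l = Legendre (-(x*e)) l" for x
      using Legendre_mult[OF l, of d' "-(x*e)"] by (simp add: mult.left_commute)
    then show ?thesis using \<open>Legendre (- p * (d' * e)) l = 1 \<or> _\<close> by simp
  next
    case False
    text \<open>The two symbols multiply to \<open>(p q | l) = -1\<close>.\<close>
    then have "Legendre (p*q) l = -1"
      using Legendre_unit Ds_not_dvd_pq[OF jn] unfolding l_def by blast
    then have "Legendre ((-(p*e)) * (-(q*e))) l = -1"
      using Legendre_square_mult[OF l \<open>\<not> l dvd e\<close>, of "p*q"] by (simp add: power2_eq_square algebra_simps)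
    then show ?thesis by (rule Legendre_eq_1_if_mult_eq_neg1[OF l])
  qed
  then show ?thesis
    unfolding l_def[symmetric] e_def[symmetric] d
    using locally_soluble_odd_if_dvd_d[OF l refl] locally_soluble_commute by blast
qed

lemma locally_soluble_at_Ds_not_mem:
  assumes U: "U \<subseteq> Pi_zero_indices" and j: "j \<in> {1..n}" "j \<notin> U"
  shows "locally_soluble (Ds j) (\<Prod>i\<in>U. Ds i) (\<Prod>i\<in>{1..n}-U. Ds i) p q"
proof -
  define l where "l = Ds j"
  define d where "d = (\<Prod>i\<in>U. Ds i)"
  have Un: "U \<subseteq> {1..n}" using U Pi_zero_indices_subset by auto
  have l: "prime l" "l \<noteq> 2" unfolding l_def using Ds_prime_odd[OF j(1)] by auto
  have "Legendre d l = 1 \<or> Legendre (p*q*d) l = 1"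
  proof (cases "Legendre (p*q) l = 1")
    case True
    have "Legendre d l = (\<Prod>i\<in>U. Legendre (Ds i) l)"
      unfolding d_def by (rule Legendre_prod[OF l])
    also have "\<dots> = 1"
      using Legendre_Ds_eq_1[OF _ j(1) _ True[unfolded l_def]] U j(2) unfolding l_def
      by (intro prod.neutral) blast
    finally have "Legendre d l = 1" .
    then show ?thesis by simp
  next
    case False
    then have "Legendre (p*q) l = -1"
      using Legendre_unit Ds_not_dvd_pq[OF j(1)] unfolding l_def by blast
    moreover have "\<not> l dvd d" unfolding l_def d_def using Ds_dvd_prod_iff[OF Un j(1)] j(2) by simp
    ultimately have "Legendre (d * (p*q*d)) l = -1"
      using Legendre_square_mult[OF l, of d "p*q"] by (simp add: power2_eq_square algebra_simps)
    then show ?thesis by (rule Legendre_eq_1_if_mult_eq_neg1[OF l])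
  qed
  then show ?thesis
    unfolding l_def[symmetric] d_def[symmetric]
    using locally_soluble_odd_if_Legendre_d[OF l] locally_soluble_odd_if_Legendre_abd[OF l] by blast
qed

lemma locally_soluble_at_2:
  assumes U: "U \<subseteq> Pi_zero_indices"
  shows "locally_soluble 2 (\<Prod>i\<in>U. Ds i) (\<Prod>i\<in>{1..n}-U. Ds i) p q"
proof -
  have Un: "U \<subseteq> {1..n}" using U Pi_zero_indices_subset by auto
  have "q = p + 2" using q_eq by simp
  moreover have "locally_soluble 2 (\<Prod>i\<in>U. Ds i) (\<Prod>i\<in>{1..n}-U. Ds i) p (p+2)"
  proof (rule locally_soluble_2_prod[OF odd_p refl D_split[OF Un]])
    show "odd D" using odd_D by simp
    fix i assume i: "i \<in> U"
    then have "i \<in> I_set p q n Ds" using U unfolding Pi_zero_indices_def by blast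
    then show "Ds i dvd D \<and>
       ([Ds i = 1] (mod 8)
      \<or> [(1 + p * (D div Ds i)) * (1 + (p+2) * (D div Ds i)) = 0] (mod 16)
      \<or> ([Ds i = 3] (mod 8) \<and> [p = 1] (mod 4))
      \<or> ([Ds i = 7] (mod 8) \<and> [p = 3] (mod 4)))"
      using Ds_dvd_D i Un \<open>q = p + 2\<close> unfolding I_set_def Let_def by auto
  qed
  ultimately show ?thesis by simp
qed

lemma prod_Ds_mem_selmer_hat:
  assumes U: "U \<subseteq> Pi_zero_indices"
  shows "(\<Prod>i\<in>U. Ds i) \<in> selmer_hat p q D (Ds ` {1..n})"
proof (rule selmer_hat_memI)
  have Un: "U \<subseteq> {1..n}" using U Pi_zero_indices_subset by auto
  then show "D = (\<Prod>i\<in>U. Ds i) * (\<Prod>i\<in>{1..n}-U. Ds i)" by (rule D_split)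
  show "(\<Prod>i\<in>U. Ds i) > 0"
    using Un Ds_prime_odd(1) prime_gt_0_int by (intro prod_pos) blast
  show "squarefree (\<Prod>i\<in>U. Ds i)"
  proof (rule squarefree_prod_coprime)
    show "squarefree (Ds i)" if "i \<in> U" for i
      using that Un Ds_prime_odd(1) squarefree_prime by blast
    show "coprime (Ds i) (Ds j)" if "i \<in> U" "j \<in> U" "i \<noteq> j" for i j
    proof -
      have ij: "i \<in> {1..n}" "j \<in> {1..n}" using that(1,2) Un by blast+
      then have "Ds i \<noteq> Ds j" using inj_Ds that(3) by (simp add: inj_on_eq_iff)
      then show ?thesis by (rule primes_coprime[OF Ds_prime_odd(1)[OF ij(1)] Ds_prime_odd(1)[OF ij(2)]])
    qed
  qed
  show "\<forall>r. prime r \<and> r dvd (\<Prod>i\<in>U. Ds i) \<longrightarrow> r \<in> {2, p, q} \<union> Ds ` {1..n}"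
  proof (intro allI impI)
    fix r assume r: "prime r \<and> r dvd (\<Prod>i\<in>U. Ds i)"
    then obtain k where k: "k \<in> U" "r dvd Ds k"
      using prime_dvd_prod_iff[OF finite_subset[OF Un]] by blast
    then have "k \<in> {1..n}" using Un by blast
    moreover from this have "r = Ds k"
      using primes_dvd_imp_eq[OF conjunct1[OF r] Ds_prime_odd(1) k(2)] by blast
    ultimately show "r \<in> {2, p, q} \<union> Ds ` {1..n}" by blast
  qed
  have "\<not> p dvd (\<Prod>i\<in>U. Ds i)" "\<not> p dvd (\<Prod>i\<in>{1..n}-U. Ds i)"
    "\<not> q dvd (\<Prod>i\<in>U. Ds i)" "\<not> q dvd (\<Prod>i\<in>{1..n}-U. Ds i)"
    using p_not_dvd_D q_not_dvd_D D_split[OF Un] by (metis dvd_mult dvd_mult2)+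
  fix l assume "l \<in> {2, p, q} \<union> Ds ` {1..n}"
  then consider "l = 2" | "l = p" | "l = q" | j where "j \<in> {1..n}" "l = Ds j" by blast
  then show "locally_soluble l (\<Prod>i\<in>U. Ds i) (\<Prod>i\<in>{1..n}-U. Ds i) p q"
  proof cases
    case 1
    then show ?thesis using locally_soluble_at_2[OF U] by simp
  next
    case 2
    have "\<not> p dvd q" using primes_dvd_imp_eq[OF prime_p prime_q] q_eq by auto
    with 2 show ?thesis
      using locally_soluble_odd_at_coefficient[OF prime_p] odd_p \<open>\<not> p dvd (\<Prod>i\<in>U. Ds i)\<close>
        \<open>\<not> p dvd (\<Prod>i\<in>{1..n}-U. Ds i)\<close> by fastforce
  next
    case 3
    have "\<not> q dvd p" using primes_dvd_imp_eq[OF prime_q prime_p] q_eq by auto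
    with 3 show ?thesis
      using locally_soluble_odd_at_coefficient[OF prime_q] odd_q \<open>\<not> q dvd (\<Prod>i\<in>U. Ds i)\<close>
        \<open>\<not> q dvd (\<Prod>i\<in>{1..n}-U. Ds i)\<close> locally_soluble_commute by fastforce
  next
    case 4
    then show ?thesis
      using locally_soluble_at_Ds_mem[OF U] locally_soluble_at_Ds_not_mem[OF U] by blast
  qed
qed

end

theorem theorem1p3:
  fixes p q :: int and n :: nat and Ds :: "nat \<Rightarrow> int"
  assumes "prime p" and "prime q" and "odd p" and "odd q" and "q - p = 2"
    and "\<forall>i\<in>{1..n}. prime (Ds i)" and "inj_on Ds {1..n}"
    and "\<not> 2 dvd (\<Prod>i\<in>{1..n}. Ds i)"
    and "\<not> p dvd (\<Prod>i\<in>{1..n}. Ds i)"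
    and "\<not> q dvd (\<Prod>i\<in>{1..n}. Ds i)"
  shows "\<exists>T \<subseteq> Ds ` {1..n}.
           int (card T) = rho_plus' p q n Ds
         \<and> gen_sq T \<subseteq> selmer_hat p q (\<Prod>i\<in>{1..n}. Ds i) (Ds ` {1..n})
         \<and> card (gen_sq T) = 2 ^ card T
         \<and> finite (selmer_hat p q (\<Prod>i\<in>{1..n}. Ds i) (Ds ` {1..n}))
         \<and> 2 ^ nat (rho_plus' p q n Ds) \<le> card (selmer_hat p q (\<Prod>i\<in>{1..n}. Ds i) (Ds ` {1..n}))"
proof -
  interpret twin_prime_data p q n Ds using assms by unfold_locales
  let ?S = "selmer_hat p q D (Ds ` {1..n})"
  define T where "T = Ds ` Pi_zero_indices"
  have inj: "inj_on Ds Pi_zero_indices" using inj_on_subset[OF inj_Ds Pi_zero_indices_subset] .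
  have T: "T \<subseteq> Ds ` {1..n}" "finite T" "\<forall>y\<in>T. prime y"
    using Pi_zero_indices_subset prime_Ds finite_subset[OF Pi_zero_indices_subset]
    unfolding T_def by auto
  have card_T: "int (card T) = rho_plus' p q n Ds"
    using card_image[OF inj] unfolding T_def rho_plus'_eq_card Pi_zero_indices_def by simp
  have "gen_sq T \<subseteq> ?S"
  proof
    fix d assume "d \<in> gen_sq T"
    then obtain V where "V \<subseteq> T" "d = \<Prod>V" unfolding gen_sq_primes[OF T(3)] by blast
    then obtain U where U: "U \<subseteq> Pi_zero_indices" "d = \<Prod>(Ds ` U)"
      unfolding T_def subset_image_iff by blast
    then have "d = (\<Prod>i\<in>U. Ds i)" using prod.reindex[OF inj_on_subset[OF inj U(1)]] by simp
    then show "d \<in> ?S" using prod_Ds_mem_selmer_hat[OF U(1)] by simp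
  qed
  moreover have "card (gen_sq T) = 2 ^ card T" using card_gen_sq_primes T(2,3) .
  moreover have "finite ?S" by (rule finite_selmer_hat) simp
  moreover have "nat (rho_plus' p q n Ds) = card T" using card_T by simp
  ultimately show ?thesis
    using T(1) card_T card_mono[of ?S "gen_sq T"] by (auto intro!: exI[of _ T])
qed

end
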